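(* Let $G=(V,E,w)$ be an undirected graph with edge weights $w:E\to\mathbb{R}^+$, let $s,t\in V$, and let $h:V\to\mathbb{R}$ be a consistent heuristic, i.e. $h(u)\le w(u,v)+h(v)$ for every edge $\{u,v\}\in E$ taken in either orientation. Run the bidirectional stepping search described in the context, using the following pruning rule, where $\mu$ is the current value of the global variable at the time of the check: - a forward copy $v^{+}$ is pruned if and only if $\delta[v^{+}]+h(v)\ge\mu/2$; - a backward copy $v^{-}$ is pruned if and only if $\delta[v^{-}]-h(v)\ge\mu/2$. Then, for every choice of thresholds in the rounds and every interleaving of the parallel atomic operations, if the algorithm terminates (i.e. the frontier becomes empty), the returned value $\mu$ equals the shortest-path distance $d(s,t)$ in $G$.
   Context: Bidirectional stepping search with a pruning rule. For every vertex $v\in V$ there are two copies: $v^{+}$ (search from $s$) and $v^{-}$ (search from $t$). Each copy has a tentative distance $\delta[v^{\pm}]$, initialized to $+\infty$. A global variable $\mu$ is initialized to $+\infty$. Initialization sets $\delta[s^{+}]=0$ and $\delta[t^{-}]=0$, and inserts $s^{+}$ and $t^{-}$ into a set $F$, the frontier. While $F\neq\emptyset$, a round is executed. A real threshold $\theta$ is chosen, and it may depend arbitrarily on the current state; for example, it may be compared against $\delta$ plus the heuristic. An arbitrary nonempty-or-empty subset of $F$ selected by this threshold is removed from $F$. Each removed $u^{\oplus}$ is processed in parallel as follows: - If $u^{\oplus}$ satisfies the pruning rule, nothing is done. - Otherwise, for every neighbor $v$ of $u$, the algorithm performs an atomic write-min $\delta[v^{\oplus}]\leftarrow\min(\delta[v^{\oplus}],\,\delta[u^{\oplus}]+w(u,v))$.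 - If this write-min strictly decreased $\delta[v^{\oplus}]$, the algorithm then atomically sets $\mu\leftarrow\min(\mu,\,\delta[v^{+}]+\delta[v^{-}])$. After that, if $v^{\oplus}$ does not satisfy the pruning rule, $v^{\oplus}$ is inserted into $F$ (if not already present). At termination the algorithm returns $\mu$. Tentative distances only decrease over time. $d(u,v)$ denotes the true shortest-path distance in $G$. *)

theory Defs
  imports Main "HOL-Library.Multiset" "HOL-Library.Extended_Real"
begin

text \<open>Graph: vertex set V, symmetric edge relation E (ordered pairs, both orientations),
  weight function w (only its values on E matter), heuristic h.
  A copy of a vertex is a pair (v, b): b = True is the forward copy v+, b = False the backward copy v-.\<close>

type_synonym 'v copy = "'v \<times> bool"

definition walk :: "('v \<times> 'v) set \<Rightarrow> 'v list \<Rightarrow> bool" where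
  "walk E xs \<longleftrightarrow> xs \<noteq> [] \<and> (\<forall>i < length xs - 1. (xs ! i, xs ! Suc i) \<in> E)"

definition walk_len :: "('v \<Rightarrow> 'v \<Rightarrow> real) \<Rightarrow> 'v list \<Rightarrow> real" where
  "walk_len w xs = (\<Sum>i < length xs - 1. w (xs ! i) (xs ! Suc i))"

definition dist :: "('v \<times> 'v) set \<Rightarrow> ('v \<Rightarrow> 'v \<Rightarrow> real) \<Rightarrow> 'v \<Rightarrow> 'v \<Rightarrow> ereal" where
  "dist E w s t = (INF xs \<in> {xs. walk E xs \<and> hd xs = s \<and> last xs = t}. ereal (walk_len w xs))"

definition nbrs :: "('v \<times> 'v) set \<Rightarrow> 'v \<Rightarrow> 'v set" where
  "nbrs E u = {v. (u, v) \<in> E}"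

fun pruned :: "('v \<Rightarrow> real) \<Rightarrow> ereal \<Rightarrow> ('v copy \<Rightarrow> ereal) \<Rightarrow> 'v copy \<Rightarrow> bool" where
  "pruned h mu d (v, True) \<longleftrightarrow> d (v, True) + ereal (h v) \<ge> mu / 2"
| "pruned h mu d (v, False) \<longleftrightarrow> d (v, False) - ereal (h v) \<ge> mu / 2"

text \<open>Pending atomic operations of the parallel processing in the current round.
  Check c: pruning test of a removed copy c;
  Rd c v: read delta[c] to form delta[c] + w(u,v) for neighbour v of u = fst c;
  Wr c x: atomic write-min delta[c] <- min(delta[c], x);
  Mu c: atomic mu <- min(mu, delta[v+] + delta[v-]) with v = fst c (after a strict decrease of delta[c]);
  Ins c: pruning test of c and insertion of c into the frontier if not pruned.\<close>
datatype 'v task = Check "'v copy" | Rd "'v copy" 'v | Wr "'v copy" ereal | Mu "'v copy" | Ins "'v copy"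

record 'v state =
  dl :: "'v copy \<Rightarrow> ereal"
  mu :: ereal
  fr :: "'v copy set"
  pend :: "'v task multiset"

definition init_state :: "'v \<Rightarrow> 'v \<Rightarrow> 'v state" where
  "init_state s t = \<lparr> dl = (\<lambda>_. \<infinity>)((s, True) := 0, (t, False) := 0), mu = \<infinity>,
                       fr = {(s, True), (t, False)}, pend = {#} \<rparr>"

text \<open>A new round starts only when all operations of the
  previous round are finished and the frontier is nonempty; it removes an arbitrary subset S
  of the frontier (the threshold may depend arbitrarily on the state). The remaining steps may
  be interleaved arbitrarily.\<close>
inductive step :: "('v \<times> 'v) set \<Rightarrow> ('v \<Rightarrow> 'v \<Rightarrow> real) \<Rightarrow> ('v \<Rightarrow> real) \<Rightarrow> 'v state \<Rightarrow> 'v state \<Rightarrow> bool"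
  for E w h where
  round: "\<lbrakk> pend \<sigma> = {#}; fr \<sigma> \<noteq> {}; S \<subseteq> fr \<sigma> \<rbrakk> \<Longrightarrow>
    step E w h \<sigma> (\<sigma>\<lparr> fr := fr \<sigma> - S, pend := image_mset Check (mset_set S) \<rparr>)"
| check_pruned: "\<lbrakk> Check c \<in># pend \<sigma>; pruned h (mu \<sigma>) (dl \<sigma>) c \<rbrakk> \<Longrightarrow>
    step E w h \<sigma> (\<sigma>\<lparr> pend := pend \<sigma> - {#Check c#} \<rparr>)"
| check_expand: "\<lbrakk> Check c \<in># pend \<sigma>; \<not> pruned h (mu \<sigma>) (dl \<sigma>) c \<rbrakk> \<Longrightarrow>
    step E w h \<sigma> (\<sigma>\<lparr> pend := pend \<sigma> - {#Check c#} + image_mset (Rd c) (mset_set (nbrs E (fst c))) \<rparr>)"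
| read: "Rd c v \<in># pend \<sigma> \<Longrightarrow>
    step E w h \<sigma> (\<sigma>\<lparr> pend := add_mset (Wr (v, snd c) (dl \<sigma> c + ereal (w (fst c) v))) (pend \<sigma> - {#Rd c v#}) \<rparr>)"
| write_dec: "\<lbrakk> Wr c x \<in># pend \<sigma>; x < dl \<sigma> c \<rbrakk> \<Longrightarrow>
    step E w h \<sigma> (\<sigma>\<lparr> dl := (dl \<sigma>)(c := x), pend := add_mset (Mu c) (pend \<sigma> - {#Wr c x#}) \<rparr>)"
| write_nodec: "\<lbrakk> Wr c x \<in># pend \<sigma>; \<not> x < dl \<sigma> c \<rbrakk> \<Longrightarrow>
    step E w h \<sigma> (\<sigma>\<lparr> pend := pend \<sigma> - {#Wr c x#} \<rparr>)"
| mu_upd: "Mu c \<in># pend \<sigma> \<Longrightarrow>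
    step E w h \<sigma> (\<sigma>\<lparr> mu := min (mu \<sigma>) (dl \<sigma> (fst c, True) + dl \<sigma> (fst c, False)),
                      pend := add_mset (Ins c) (pend \<sigma> - {#Mu c#}) \<rparr>)"
| ins_pruned: "\<lbrakk> Ins c \<in># pend \<sigma>; pruned h (mu \<sigma>) (dl \<sigma>) c \<rbrakk> \<Longrightarrow>
    step E w h \<sigma> (\<sigma>\<lparr> pend := pend \<sigma> - {#Ins c#} \<rparr>)"
| ins_add: "\<lbrakk> Ins c \<in># pend \<sigma>; \<not> pruned h (mu \<sigma>) (dl \<sigma>) c \<rbrakk> \<Longrightarrow>
    step E w h \<sigma> (\<sigma>\<lparr> fr := insert c (fr \<sigma>), pend := pend \<sigma> - {#Ins c#} \<rparr>)"

end

theory Submission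
  imports Defs
begin

(* Soundness: every finite tentative distance, every value carried by a pending write, and mu
   itself are lengths of actual walks (from s for forward copies, to t for backward copies), so
   mu >= d(s,t).

   Optimality: every reachable state satisfies two invariants. Each copy is awaiting expansion
   (in the frontier, or with a pending Check, Mu or Ins task), or pruned, or each of its edges is
   relaxed or about to be (pending Rd or Wr task); and mu <= delta[v+] + delta[v-] unless a Mu task
   for a copy of v is pending. They survive every atomic step because tentative distances only
   decrease, every decrease of delta[c] spawns Mu c, and pruning persists as mu decreases. At
   termination nothing is pending, so every unpruned copy has relaxed all its edges and
   mu <= delta[v+] + delta[v-] for every v.

   Now let x_0 ... x_m be an s-t walk of length L < mu with prefix lengths p_i. By consistency the
   forward keys p_i + h(x_i) are nondecreasing, and at every i the forward key or the backward key
   (L - p_i) - h(x_i) is below mu/2. If k is the first index whose forward key reaches mu/2, the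
   forward search relaxes the walk up to x_k and the backward search relaxes it down to x_k, so
   mu <= delta[x_k+] + delta[x_k-] <= L, a contradiction. *)

lemma walk_Cons: "xs \<noteq> [] \<Longrightarrow> walk E (x # xs) \<longleftrightarrow> (x, hd xs) \<in> E \<and> walk E xs"
  by (cases xs) (auto simp: walk_def nth_Cons' less_Suc_eq_0_disj)

lemma walk_len_Cons: "xs \<noteq> [] \<Longrightarrow> walk_len w (x # xs) = w x (hd xs) + walk_len w xs"
  by (cases xs) (simp_all add: walk_len_def sum.lessThan_Suc_shift del: sum.lessThan_Suc)

lemma walk_append:
  assumes "walk E xs" "walk E ys" "last xs = hd ys"
  shows "walk E (xs @ tl ys) \<and> walk_len w (xs @ tl ys) = walk_len w xs + walk_len w ys"
  using assms
proof (induction xs)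
  case Nil
  then show ?case by (simp add: walk_def)
next
  case (Cons x xs)
  show ?case
  proof (cases "xs = []")
    case True
    with Cons.prems have "x # tl ys = ys"
      by (metis last_ConsL list.collapse walk_def)
    with True show ?thesis
      using Cons.prems by (simp add: walk_len_def)
  next
    case False
    with Cons show ?thesis
      by (simp add: walk_Cons walk_len_Cons)
  qed
qed

definition has_walk_within :: "('v \<times> 'v) set \<Rightarrow> ('v \<Rightarrow> 'v \<Rightarrow> real) \<Rightarrow> 'v \<Rightarrow> 'v \<Rightarrow> ereal \<Rightarrow> bool"
  where "has_walk_within E w a b x \<longleftrightarrow>
    x = \<infinity> \<or> (\<exists>xs. walk E xs \<and> hd xs = a \<and> last xs = b \<and> ereal (walk_len w xs) \<le> x)"

lemma has_walk_within_infinity [simp]: "has_walk_within E w a b \<infinity>"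
  by (simp add: has_walk_within_def)

lemma has_walk_within_refl: "has_walk_within E w a a 0"
  unfolding has_walk_within_def
  by (rule disjI2, rule exI[of _ "[a]"]) (simp add: walk_def walk_len_def)

lemma has_walk_within_edge: "(u, v) \<in> E \<Longrightarrow> has_walk_within E w u v (ereal (w u v))"
  unfolding has_walk_within_def
  by (rule disjI2, rule exI[of _ "[u, v]"]) (simp add: walk_def walk_len_def)

lemma has_walk_within_neq_minf: "has_walk_within E w a b x \<Longrightarrow> x \<noteq> -\<infinity>"
  unfolding has_walk_within_def by auto

lemma has_walk_within_append:
  assumes "has_walk_within E w a b x" "has_walk_within E w b c y"
  shows "has_walk_within E w a c (x + y)"
proof (cases "x = \<infinity> \<or> y = \<infinity>")
  case True
  with assms show ?thesis
    by (auto dest: has_walk_within_neq_minf)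
next
  case False
  with assms obtain xs ys where
    xs: "walk E xs" "hd xs = a" "last xs = b" "ereal (walk_len w xs) \<le> x" and
    ys: "walk E ys" "hd ys = b" "last ys = c" "ereal (walk_len w ys) \<le> y"
    unfolding has_walk_within_def by blast
  then have "walk E (xs @ tl ys)" "walk_len w (xs @ tl ys) = walk_len w xs + walk_len w ys"
    using walk_append[of E xs ys w] by auto
  moreover have "hd (xs @ tl ys) = a" "last (xs @ tl ys) = c"
    using xs ys by (auto simp: walk_def last_append last_tl) (metis last_ConsL list.collapse)
  moreover have "ereal (walk_len w xs + walk_len w ys) \<le> x + y"
    using add_mono[OF xs(4) ys(4)] by simp
  ultimately show ?thesis
    unfolding has_walk_within_def by metis
qed

lemma dist_le_if_has_walk_within: "has_walk_within E w a b x \<Longrightarrow> dist E w a b \<le> x"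
  unfolding has_walk_within_def dist_def by (auto intro: INF_lower2)

definition relaxed :: "('v \<times> 'v) set \<Rightarrow> ('v \<Rightarrow> 'v \<Rightarrow> real) \<Rightarrow> ('v \<Rightarrow> real) \<Rightarrow>
    ereal \<Rightarrow> ('v copy \<Rightarrow> ereal) \<Rightarrow> bool"
  where "relaxed E w h \<mu> d \<longleftrightarrow>
    (\<forall>u v b. (u, v) \<in> E \<longrightarrow> \<not> pruned h \<mu> d (u, b) \<longrightarrow> d (v, b) \<le> d (u, b) + ereal (w u v))"

lemma relaxed_forward:
  assumes "relaxed E w h \<mu> d" "d (x 0, True) \<le> 0"
    and "\<And>i. i < m \<Longrightarrow> (x i, x (Suc i)) \<in> E"
    and "k \<le> m" "\<And>i. i < k \<Longrightarrow> ereal ((\<Sum>j<i. w (x j) (x (Suc j))) + h (x i)) < \<mu> / 2"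
  shows "d (x k, True) \<le> ereal (\<Sum>j<k. w (x j) (x (Suc j)))"
  using assms(4,5)
proof (induction k)
  case 0
  then show ?case using assms(2) by (simp add: zero_ereal_def)
next
  case (Suc k)
  let ?p = "\<Sum>j<k. w (x j) (x (Suc j))"
  have IH: "d (x k, True) \<le> ereal ?p"
    using Suc by simp
  have "d (x k, True) + ereal (h (x k)) < \<mu> / 2"
    using add_right_mono[OF IH, of "ereal (h (x k))"] Suc.prems(2)[of k] by simp
  then have "\<not> pruned h \<mu> d (x k, True)"
    by simp
  then have "d (x (Suc k), True) \<le> d (x k, True) + ereal (w (x k) (x (Suc k)))"
    using assms(1,3) Suc.prems(1) unfolding relaxed_def by simp
  also have "\<dots> \<le> ereal (?p + w (x k) (x (Suc k)))"
    using add_right_mono[OF IH, of "ereal (w (x k) (x (Suc k)))"] by simp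
  finally show ?case
    by simp
qed

lemma relaxed_backward:
  assumes "relaxed E w h \<mu> d" "d (x m, False) \<le> 0"
    and "\<And>i. i < m \<Longrightarrow> (x (Suc i), x i) \<in> E" "\<And>i. i < m \<Longrightarrow> w (x (Suc i)) (x i) = w (x i) (x (Suc i))"
    and "k \<le> m" "\<And>i. k < i \<Longrightarrow> i \<le> m \<Longrightarrow> ereal ((\<Sum>j\<in>{i..<m}. w (x j) (x (Suc j))) - h (x i)) < \<mu> / 2"
  shows "d (x k, False) \<le> ereal (\<Sum>j\<in>{k..<m}. w (x j) (x (Suc j)))"
  using assms(5,6)
proof (induction k rule: inc_induct)
  case base
  then show ?case using assms(2) by (simp add: zero_ereal_def)
next
  case (step k)
  let ?q = "\<Sum>j\<in>{Suc k..<m}. w (x j) (x (Suc j))"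
  have IH: "d (x (Suc k), False) \<le> ereal ?q"
    using step by simp
  have "d (x (Suc k), False) - ereal (h (x (Suc k))) < \<mu> / 2"
    using ereal_minus_mono[OF IH order.refl, of "ereal (h (x (Suc k)))"]
      step.prems[of "Suc k"] step.hyps
    by simp
  then have "\<not> pruned h \<mu> d (x (Suc k), False)"
    by simp
  then have "d (x k, False) \<le> d (x (Suc k), False) + ereal (w (x k) (x (Suc k)))"
    using assms(1,3,4) step.hyps unfolding relaxed_def by fastforce
  also have "\<dots> \<le> ereal (?q + w (x k) (x (Suc k)))"
    using add_right_mono[OF IH, of "ereal (w (x k) (x (Suc k)))"] by simp
  finally show ?case
    using step.hyps by (simp add: sum.atLeast_Suc_lessThan add.commute)
qed

lemma ereal_less_half_if_add_less:
  "ereal (a + b) < \<mu> \<Longrightarrow> ereal a < \<mu> / 2 \<or> ereal b < \<mu> / 2"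
  by (cases \<mu>) auto

lemma relaxed_walk_bound:
  assumes sym: "\<And>u v. (u, v) \<in> E \<Longrightarrow> (v, u) \<in> E"
    and w_sym: "\<And>u v. (u, v) \<in> E \<Longrightarrow> w u v = w v u"
    and consistent: "\<And>u v. (u, v) \<in> E \<Longrightarrow> h u \<le> w u v + h v"
    and relaxed: "relaxed E w h \<mu> d" and meet: "\<And>v. \<mu> \<le> d (v, True) + d (v, False)"
    and "d (s, True) \<le> 0" "d (t, False) \<le> 0"
    and walk: "walk E xs" "hd xs = s" "last xs = t"
  shows "\<mu> \<le> ereal (walk_len w xs)"
proof (rule ccontr)
  define m where "m = length xs - 1"
  define x where "x = nth xs"
  define p where "p k = (\<Sum>j<k. w (x j) (x (Suc j)))" for k
  define q where "q k = (\<Sum>j\<in>{k..<m}. w (x j) (x (Suc j)))" for k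
  assume "\<not> \<mu> \<le> ereal (walk_len w xs)"
  moreover have "p k + q k = walk_len w xs" if "k \<le> m" for k
    using that sum.atLeastLessThan_concat[of 0 k m]
    by (simp add: p_def q_def x_def m_def walk_len_def lessThan_atLeast0)
  ultimately have short: "ereal (p k + q k) < \<mu>" if "k \<le> m" for k
    using that by auto
  have edge: "(x i, x (Suc i)) \<in> E" if "i < m" for i
    using walk(1) that by (simp add: walk_def x_def m_def)
  have "x 0 = s" "x m = t"
    using walk by (simp_all add: walk_def x_def m_def hd_conv_nth last_conv_nth)
  then have ends: "d (x 0, True) \<le> 0" "d (x m, False) \<le> 0"
    using assms(6,7) by simp_all
  have forward_key_mono: "p i + h (x i) \<le> p j + h (x j)" if "i \<le> j" "j \<le> m" for i j
    using that
  proof (induction j rule: dec_induct)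
    case (step j)
    then show ?case
      using consistent[OF edge, of j] by (simp add: p_def)
  qed simp
  obtain k where k_stop: "k = m \<or> \<not> ereal (p k + h (x k)) < \<mu> / 2"
    and k_least: "\<And>i. i < k \<Longrightarrow> i \<noteq> m \<and> ereal (p i + h (x i)) < \<mu> / 2"
    using exists_least_iff[of "\<lambda>k. k = m \<or> \<not> ereal (p k + h (x k)) < \<mu> / 2"] by auto
  have k: "k \<le> m" "\<And>i. i < k \<Longrightarrow> ereal (p i + h (x i)) < \<mu> / 2"
    using k_least[of m] k_least by (fastforce, blast)
  have low_backward: "ereal (q i - h (x i)) < \<mu> / 2" if "k < i" "i \<le> m" for i
  proof -
    have "\<mu> / 2 \<le> ereal (p k + h (x k))"
      using k_stop that by (simp add: not_less)
    also have "\<dots> \<le> ereal (p i + h (x i))"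
      using forward_key_mono[of k i] that by simp
    finally have "\<not> ereal (p i + h (x i)) < \<mu> / 2"
      by simp
    then show ?thesis
      using ereal_less_half_if_add_less[of "p i + h (x i)" "q i - h (x i)" \<mu>] short[OF that(2)]
      by simp
  qed
  have "d (x k, False) \<le> ereal (q k)"
    unfolding q_def
    by (rule relaxed_backward[where x = x and m = m, OF relaxed ends(2)])
      (use sym edge w_sym k(1) low_backward in \<open>auto simp: q_def\<close>)
  moreover have "d (x k, True) \<le> ereal (p k)"
    unfolding p_def
    by (rule relaxed_forward[where x = x and m = m, OF relaxed ends(1)])
      (use edge k in \<open>auto simp: p_def\<close>)
  ultimately have "d (x k, True) + d (x k, False) \<le> ereal (p k + q k)"
    using add_mono by fastforce
  then have "\<mu> \<le> ereal (p k + q k)"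
    using meet[of "x k"] by simp
  then show False
    using short[OF k(1)] by simp
qed

lemma in_mset_setD: "x \<in># mset_set A \<Longrightarrow> x \<in> A"
  by (cases "finite A") auto

lemma step_Check:
  assumes "step E w h \<sigma> \<sigma>'" "Check c \<in># pend \<sigma>" "finite (nbrs E (fst c))"
  shows "Check c \<in># pend \<sigma>' \<or> pruned h (mu \<sigma>) (dl \<sigma>) c \<or> (\<forall>v \<in> nbrs E (fst c). Rd c v \<in># pend \<sigma>')"
  using assms by cases (auto simp: in_diff_count)

lemma step_Rd:
  assumes "step E w h \<sigma> \<sigma>'" "Rd c v \<in># pend \<sigma>"
  shows "Rd c v \<in># pend \<sigma>' \<or> Wr (v, snd c) (dl \<sigma> c + ereal (w (fst c) v)) \<in># pend \<sigma>'"
  using assms by cases (auto simp: in_diff_count)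

lemma step_Wr:
  assumes "step E w h \<sigma> \<sigma>'" "Wr c x \<in># pend \<sigma>"
  shows "Wr c x \<in># pend \<sigma>' \<or> dl \<sigma>' c \<le> x"
  using assms by cases (auto simp: in_diff_count)

lemma step_Mu:
  assumes "step E w h \<sigma> \<sigma>'" "Mu c \<in># pend \<sigma>"
  shows "Mu c \<in># pend \<sigma>' \<or> Ins c \<in># pend \<sigma>' \<and> mu \<sigma>' \<le> dl \<sigma> (fst c, True) + dl \<sigma> (fst c, False)"
  using assms by cases (auto simp: in_diff_count)

lemma step_Ins:
  assumes "step E w h \<sigma> \<sigma>'" "Ins c \<in># pend \<sigma>"
  shows "Ins c \<in># pend \<sigma>' \<or> pruned h (mu \<sigma>) (dl \<sigma>) c \<or> c \<in> fr \<sigma>'"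
  using assms by cases (auto simp: in_diff_count)

lemma step_fr:
  assumes "step E w h \<sigma> \<sigma>'" "c \<in> fr \<sigma>" "finite (fr \<sigma>)"
  shows "c \<in> fr \<sigma>' \<or> Check c \<in># pend \<sigma>'"
  using assms by cases (auto dest: finite_subset)

lemma step_finite_fr: "step E w h \<sigma> \<sigma>' \<Longrightarrow> finite (fr \<sigma>) \<Longrightarrow> finite (fr \<sigma>')"
  by (induction rule: step.induct) auto

lemma step_dl_mono: "step E w h \<sigma> \<sigma>' \<Longrightarrow> dl \<sigma>' c \<le> dl \<sigma> c"
  by (induction rule: step.induct) auto

lemma step_mu_mono: "step E w h \<sigma> \<sigma>' \<Longrightarrow> mu \<sigma>' \<le> mu \<sigma>"
  by (induction rule: step.induct) auto

lemma step_dl_decrease: "step E w h \<sigma> \<sigma>' \<Longrightarrow> dl \<sigma>' c \<noteq> dl \<sigma> c \<Longrightarrow> Mu c \<in># pend \<sigma>'"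
  by (induction rule: step.induct) (auto split: if_splits)

lemma pruned_antimono:
  assumes "pruned h \<mu> d c" "\<mu>' \<le> \<mu>" "d' c = d c"
  shows "pruned h \<mu>' d' c"
proof -
  have half: "\<mu>' / 2 \<le> \<mu> / 2"
    using \<open>\<mu>' \<le> \<mu>\<close> by (rule ereal_divide_right_mono) simp
  obtain v b where c: "c = (v, b)" by fastforce
  show ?thesis
    using assms(1,3) order_trans[OF half] unfolding c by (cases b) simp_all
qed

lemma step_pruned:
  "step E w h \<sigma> \<sigma>' \<Longrightarrow> pruned h (mu \<sigma>) (dl \<sigma>) c \<Longrightarrow> dl \<sigma>' c = dl \<sigma> c \<Longrightarrow> pruned h (mu \<sigma>') (dl \<sigma>') c"
  using pruned_antimono step_mu_mono by blast

definition realizable :: "('v \<times> 'v) set \<Rightarrow> ('v \<Rightarrow> 'v \<Rightarrow> real) \<Rightarrow> 'v \<Rightarrow> 'v \<Rightarrow> 'v copy \<Rightarrow> ereal \<Rightarrow> bool"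
  where "realizable E w s t c x \<longleftrightarrow>
    (if snd c then has_walk_within E w s (fst c) x else has_walk_within E w (fst c) t x)"

lemma realizable_extend:
  assumes sym: "\<And>u v. (u, v) \<in> E \<Longrightarrow> (v, u) \<in> E" and w_sym: "\<And>u v. (u, v) \<in> E \<Longrightarrow> w u v = w v u"
    and "realizable E w s t c x" "(fst c, v) \<in> E"
  shows "realizable E w s t (v, snd c) (x + ereal (w (fst c) v))"
proof (cases "snd c")
  case True
  then show ?thesis
    using assms(3,4) has_walk_within_append has_walk_within_edge by (fastforce simp: realizable_def)
next
  case False
  have "has_walk_within E w v (fst c) (ereal (w (fst c) v))"
    using has_walk_within_edge[OF sym[OF assms(4)]] w_sym[OF assms(4)] by simp
  then show ?thesis
    using False assms(3) has_walk_within_append by (fastforce simp: realizable_def add.commute)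
qed

definition sound_state :: "('v \<times> 'v) set \<Rightarrow> ('v \<Rightarrow> 'v \<Rightarrow> real) \<Rightarrow> 'v \<Rightarrow> 'v \<Rightarrow> 'v state \<Rightarrow> bool"
  where "sound_state E w s t \<sigma> \<longleftrightarrow>
    (\<forall>c. realizable E w s t c (dl \<sigma> c)) \<and> has_walk_within E w s t (mu \<sigma>)
    \<and> (\<forall>c v. Rd c v \<in># pend \<sigma> \<longrightarrow> (fst c, v) \<in> E)
    \<and> (\<forall>c x. Wr c x \<in># pend \<sigma> \<longrightarrow> realizable E w s t c x)"

lemma sound_state_init: "sound_state E w s t (init_state s t)"
  by (auto simp: sound_state_def init_state_def realizable_def has_walk_within_refl)

lemma sound_state_step:
  assumes sym: "\<And>u v. (u, v) \<in> E \<Longrightarrow> (v, u) \<in> E" and w_sym: "\<And>u v. (u, v) \<in> E \<Longrightarrow> w u v = w v u"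
    and st: "step E w h \<sigma> \<sigma>'" and sound: "sound_state E w s t \<sigma>"
  shows "sound_state E w s t \<sigma>'"
  using st
proof cases
  case (check_expand c)
  then show ?thesis
    using sound by (auto simp: sound_state_def nbrs_def dest!: in_diffD in_mset_setD)
next
  case (read c v)
  have "realizable E w s t c (dl \<sigma> c)" "(fst c, v) \<in> E"
    using sound read unfolding sound_state_def by blast+
  then have "realizable E w s t (v, snd c) (dl \<sigma> c + ereal (w (fst c) v))"
    using realizable_extend[of E w s t c "dl \<sigma> c" v] sym w_sym by blast
  with read show ?thesis
    using sound by (auto simp: sound_state_def dest: in_diffD)
next
  case (write_dec c x)
  then show ?thesis
    using sound by (auto simp: sound_state_def dest: in_diffD)
next
  case (mu_upd c)
  have "realizable E w s t (fst c, True) (dl \<sigma> (fst c, True))"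
    "realizable E w s t (fst c, False) (dl \<sigma> (fst c, False))"
    using sound unfolding sound_state_def by blast+
  then have "has_walk_within E w s t (dl \<sigma> (fst c, True) + dl \<sigma> (fst c, False))"
    unfolding realizable_def by (auto intro: has_walk_within_append)
  with mu_upd show ?thesis
    using sound by (auto simp: sound_state_def min_def dest: in_diffD)
qed (use sound in \<open>auto simp: sound_state_def dest: in_diffD\<close>)

lemma sound_state_reachable:
  assumes "\<And>u v. (u, v) \<in> E \<Longrightarrow> (v, u) \<in> E" "\<And>u v. (u, v) \<in> E \<Longrightarrow> w u v = w v u"
    and "(step E w h)\<^sup>*\<^sup>* (init_state s t) \<sigma>"
  shows "sound_state E w s t \<sigma>"
  using assms(3)
proof (induction rule: rtranclp_induct)
  case base
  show ?case
    by (rule sound_state_init)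
next
  case (step \<sigma> \<sigma>')
  then show ?case
    using sound_state_step[of E w h \<sigma> \<sigma>' s t] assms(1,2) by blast
qed

definition meeting_invariant :: "'v state \<Rightarrow> bool" where
  "meeting_invariant \<sigma> \<longleftrightarrow> (\<forall>v. mu \<sigma> \<le> dl \<sigma> (v, True) + dl \<sigma> (v, False)
     \<or> Mu (v, True) \<in># pend \<sigma> \<or> Mu (v, False) \<in># pend \<sigma>)"

lemma meeting_invariant_step:
  assumes st: "step E w h \<sigma> \<sigma>'" and inv: "meeting_invariant \<sigma>"
  shows "meeting_invariant \<sigma>'"
  unfolding meeting_invariant_def
proof
  fix v
  show "mu \<sigma>' \<le> dl \<sigma>' (v, True) + dl \<sigma>' (v, False)
    \<or> Mu (v, True) \<in># pend \<sigma>' \<or> Mu (v, False) \<in># pend \<sigma>'"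
  proof (cases "dl \<sigma>' (v, True) = dl \<sigma> (v, True) \<and> dl \<sigma>' (v, False) = dl \<sigma> (v, False)")
    case True
    then have "dl \<sigma>' (v, True) + dl \<sigma>' (v, False) = dl \<sigma> (v, True) + dl \<sigma> (v, False)"
      by simp
    moreover have "mu \<sigma>' \<le> mu \<sigma>"
      using st by (rule step_mu_mono)
    ultimately show ?thesis
      using inv step_Mu[OF st, of "(v, True)"] step_Mu[OF st, of "(v, False)"]
      unfolding meeting_invariant_def by (auto intro: order_trans)
  next
    case False
    then show ?thesis
      using step_dl_decrease[OF st] by blast
  qed
qed

lemma meeting_invariant_reachable:
  assumes "s \<noteq> t" "(step E w h)\<^sup>*\<^sup>* (init_state s t) \<sigma>"
  shows "meeting_invariant \<sigma>"
  using assms(2)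
proof (induction rule: rtranclp_induct)
  case base
  show ?case
    using assms(1) by (simp add: meeting_invariant_def init_state_def)
next
  case (step \<sigma> \<sigma>')
  then show ?case
    using meeting_invariant_step by blast
qed

definition awaiting_expansion :: "'v state \<Rightarrow> 'v copy \<Rightarrow> bool" where
  "awaiting_expansion \<sigma> c \<longleftrightarrow>
     c \<in> fr \<sigma> \<or> Check c \<in># pend \<sigma> \<or> Mu c \<in># pend \<sigma> \<or> Ins c \<in># pend \<sigma>"

definition edge_relaxed_or_pending ::
  "('v \<Rightarrow> 'v \<Rightarrow> real) \<Rightarrow> 'v state \<Rightarrow> 'v copy \<Rightarrow> 'v \<Rightarrow> bool" where
  "edge_relaxed_or_pending w \<sigma> c v \<longleftrightarrow> dl \<sigma> (v, snd c) \<le> dl \<sigma> c + ereal (w (fst c) v)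
     \<or> Rd c v \<in># pend \<sigma>
     \<or> (\<exists>x. x \<le> dl \<sigma> c + ereal (w (fst c) v) \<and> Wr (v, snd c) x \<in># pend \<sigma>)"

definition copy_handled ::
  "('v \<times> 'v) set \<Rightarrow> ('v \<Rightarrow> 'v \<Rightarrow> real) \<Rightarrow> ('v \<Rightarrow> real) \<Rightarrow> 'v state \<Rightarrow> 'v copy \<Rightarrow> bool" where
  "copy_handled E w h \<sigma> c \<longleftrightarrow> awaiting_expansion \<sigma> c \<or> pruned h (mu \<sigma>) (dl \<sigma>) c
     \<or> (\<forall>v \<in> nbrs E (fst c). edge_relaxed_or_pending w \<sigma> c v)"

lemma edge_relaxed_or_pending_step:
  assumes st: "step E w h \<sigma> \<sigma>'" and rel: "edge_relaxed_or_pending w \<sigma> c v"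
    and same: "dl \<sigma>' c = dl \<sigma> c"
  shows "edge_relaxed_or_pending w \<sigma>' c v"
  using rel[unfolded edge_relaxed_or_pending_def]
proof (elim disjE exE conjE)
  assume "dl \<sigma> (v, snd c) \<le> dl \<sigma> c + ereal (w (fst c) v)"
  then show ?thesis
    using step_dl_mono[OF st, of "(v, snd c)"] by (auto simp: edge_relaxed_or_pending_def same)
next
  assume "Rd c v \<in># pend \<sigma>"
  then show ?thesis
    using step_Rd[OF st, of c v] unfolding edge_relaxed_or_pending_def same by blast
next
  fix x
  assume "x \<le> dl \<sigma> c + ereal (w (fst c) v)" "Wr (v, snd c) x \<in># pend \<sigma>"
  then show ?thesis
    using step_Wr[OF st, of "(v, snd c)" x] unfolding edge_relaxed_or_pending_def same
    by (blast intro: order_trans)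
qed

lemma copy_handled_step:
  assumes st: "step E w h \<sigma> \<sigma>'" and handled: "copy_handled E w h \<sigma> c"
    and "finite (fr \<sigma>)" "finite (nbrs E (fst c))"
  shows "copy_handled E w h \<sigma>' c"
proof (cases "dl \<sigma>' c = dl \<sigma> c")
  case True
  note pruned = step_pruned[OF st _ True]
  have "awaiting_expansion \<sigma>' c \<or> pruned h (mu \<sigma>') (dl \<sigma>') c
      \<or> (\<forall>v \<in> nbrs E (fst c). Rd c v \<in># pend \<sigma>')"
    if "awaiting_expansion \<sigma> c"
    using that step_fr[OF st _ \<open>finite (fr \<sigma>)\<close>] step_Check[OF st _ \<open>finite (nbrs E (fst c))\<close>]
      step_Mu[OF st] step_Ins[OF st] pruned
    unfolding awaiting_expansion_def by blast
  then show ?thesis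
    using handled pruned edge_relaxed_or_pending_step[OF st _ True]
    unfolding copy_handled_def edge_relaxed_or_pending_def by blast
next
  case False
  then show ?thesis
    using step_dl_decrease[OF st] by (auto simp: copy_handled_def awaiting_expansion_def)
qed

definition expansion_invariant ::
  "('v \<times> 'v) set \<Rightarrow> ('v \<Rightarrow> 'v \<Rightarrow> real) \<Rightarrow> ('v \<Rightarrow> real) \<Rightarrow> 'v state \<Rightarrow> bool" where
  "expansion_invariant E w h \<sigma> \<longleftrightarrow> finite (fr \<sigma>) \<and> (\<forall>c. copy_handled E w h \<sigma> c)"

lemma expansion_invariant_reachable:
  assumes "\<And>u. finite (nbrs E u)" "(step E w h)\<^sup>*\<^sup>* (init_state s t) \<sigma>"
  shows "expansion_invariant E w h \<sigma>"
  using assms(2)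
proof (induction rule: rtranclp_induct)
  case base
  show ?case
    by (auto simp: expansion_invariant_def copy_handled_def awaiting_expansion_def
        edge_relaxed_or_pending_def init_state_def)
next
  case (step \<sigma> \<sigma>')
  then show ?case
    using copy_handled_step[OF step.hyps(2)] step_finite_fr[OF step.hyps(2)] assms(1)
    by (simp add: expansion_invariant_def)
qed

lemma dl_reachable_le_init:
  "(step E w h)\<^sup>*\<^sup>* (init_state s t) \<sigma> \<Longrightarrow> dl \<sigma> c \<le> dl (init_state s t) c"
  by (induction rule: rtranclp_induct) (auto dest: step_dl_mono[of _ _ _ _ _ c] intro: order_trans)

lemma relaxed_if_terminated:
  assumes "expansion_invariant E w h \<sigma>" "fr \<sigma> = {}" "pend \<sigma> = {#}"
  shows "relaxed E w h (mu \<sigma>) (dl \<sigma>)"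
  using assms
  by (fastforce simp: expansion_invariant_def copy_handled_def awaiting_expansion_def
      edge_relaxed_or_pending_def relaxed_def nbrs_def)

lemma meet_if_terminated:
  "meeting_invariant \<sigma> \<Longrightarrow> pend \<sigma> = {#} \<Longrightarrow> mu \<sigma> \<le> dl \<sigma> (v, True) + dl \<sigma> (v, False)"
  by (simp add: meeting_invariant_def)

theorem theorem3p3:
  fixes V :: "'v set" and E :: "('v \<times> 'v) set" and w :: "'v \<Rightarrow> 'v \<Rightarrow> real"
    and h :: "'v \<Rightarrow> real" and s t :: 'v and \<sigma> :: "'v state"
  assumes "finite V" and "E \<subseteq> V \<times> V"
    and "\<And>u v. (u, v) \<in> E \<Longrightarrow> (v, u) \<in> E"
    and "\<And>u v. (u, v) \<in> E \<Longrightarrow> w u v = w v u"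
    and "\<And>u v. (u, v) \<in> E \<Longrightarrow> w u v > 0"
    and "\<And>u v. (u, v) \<in> E \<Longrightarrow> h u \<le> w u v + h v"
    and "s \<in> V" and "t \<in> V" and "s \<noteq> t"
    and "(step E w h)\<^sup>*\<^sup>* (init_state s t) \<sigma>"
    and "fr \<sigma> = {}" and "pend \<sigma> = {#}"
  shows "mu \<sigma> = dist E w s t"
proof -
  have "finite (nbrs E u)" for u
    using assms(1,2) by (auto simp: nbrs_def intro: finite_subset[of _ V])
  then have relaxed: "relaxed E w h (mu \<sigma>) (dl \<sigma>)"
    using relaxed_if_terminated[OF expansion_invariant_reachable assms(11,12)] assms(10) by blast
  have meet: "mu \<sigma> \<le> dl \<sigma> (v, True) + dl \<sigma> (v, False)" for v
    by (rule meet_if_terminated[OF meeting_invariant_reachable[OF assms(9,10)] assms(12)])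
  have ends: "dl \<sigma> (s, True) \<le> 0" "dl \<sigma> (t, False) \<le> 0"
    using dl_reachable_le_init[OF assms(10), of "(s, True)"]
      dl_reachable_le_init[OF assms(10), of "(t, False)"]
    by (simp_all add: init_state_def)
  have "mu \<sigma> \<le> dist E w s t"
    unfolding dist_def
  proof (rule INF_greatest)
    fix xs
    assume "xs \<in> {xs. walk E xs \<and> hd xs = s \<and> last xs = t}"
    then show "mu \<sigma> \<le> ereal (walk_len w xs)"
      using relaxed_walk_bound[OF assms(3,4,6) relaxed meet ends] by simp
  qed
  moreover have "dist E w s t \<le> mu \<sigma>"
    using sound_state_reachable[OF assms(3,4,10)]
    unfolding sound_state_def by (blast intro: dist_le_if_has_walk_within)
  ultimately show ?thesis
    by simp
qed

end
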